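(* Let $E$ be finite, $X_+=E^{\mathbb{Z}_+}$, $X_-=E^{-\mathbb{N}}$, $X=E^{\mathbb{Z}}=X_-\times X_+$. Let $\phi:X_+\to\mathbb{R}$ be continuous and satisfy the extensibility condition, and let $\nu$ be a half-line Gibbs measure for $\phi$. Let $\rho$ be the uniform Bernoulli measure on $X_-$, $\mu_0:=\rho\times\nu$ on $X$, and $\mu_n:=\mu_0\circ S^{-n}$ for $n\ge0$. Assume a subsequence $(\mu_{n_k})_{k\ge0}$ converges in the weak$^*$ topology to a probability measure $\mu$ on $X$. Then for $\mu$-almost every $x\in X$, $$\mu(x_0|x_{-\infty}^{-1},x_1^\infty)=\overset{\rightleftharpoons}{\gamma}^{\phi}_{\{0\}}(x_0|x_{-\infty}^{-1},x_1^\infty)=\lim_{n\to\infty}\frac{\exp(S_{n+1}\phi(x_{-n}^{-1}x_0x_1^\infty))}{\sum_{\bar a_0\in E}\exp(S_{n+1}\phi(x_{-n}^{-1}\bar a_0x_1^\infty))},$$ and hence $\mu$ is a Gibbs measure for the whole-line specification $\overset{\rightleftharpoons}{\gamma}^{\phi}$.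
   Context: $S$ is the left shift on $X_+$ and on $X$, $S_n\phi=\sum_{k=0}^{n-1}\phi\circ S^k$; strings like $x_{-n}^{-1}a x_1^\infty$ are viewed as elements of $X_+$ by re-indexing their first coordinate as $0$. Extensibility condition: for all $a_0,b_0\in E$, $\sum_{i=0}^n(\phi(x_{-i}^{-1}b_0x_1^\infty)-\phi(x_{-i}^{-1}a_0x_1^\infty))$ converges uniformly in $x\in X$ as $n\to\infty$. Half-line Gibbs measure: a probability $\nu$ on $X_+$ such that for every $n\ge1$, $\nu(x_0^{n-1}=a_0^{n-1}\mid x_n^\infty)=\frac{\exp(S_n\phi(a_0^{n-1}x_n^\infty))}{\sum_{\bar a_0^{n-1}}\exp(S_n\phi(\bar a_0^{n-1}x_n^\infty))}$ $\nu$-a.s. For $\phi$ extensible, the limits $\overset{\rightleftharpoons}{\gamma}^{\phi}_{\{i\}}(\sigma_i|\omega_{\{i\}^c})=\lim_{p\to\infty}e^{S_{i+p+1}\phi(\omega_{-p}^{i-1}\sigma_i\omega_{i+1}^\infty)}/\sum_{\bar\omega_i}e^{S_{i+p+1}\phi(\omega_{-p}^{i-1}\bar\omega_i\omega_{i+1}^\infty)}$ exist and are the single-site kernels of a unique translation-invariant quasilocal non-null specification $\overset{\rightleftharpoons}{\gamma}^{\phi}$ on $X$; a probability measure on $X$ is Gibbs for it iff for each $i$ the conditional law of $x_i$ given $x_{\{i\}^c}$ is $\overset{\rightleftharpoons}{\gamma}^{\phi}_{\{i\}}$ a.s. *)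

theory Defs
  imports "HOL-Probability.Probability"
begin

text \<open>Alphabet E: a finite type with the discrete topology.
  X_+ = nat \<Rightarrow> 'e, X = int \<Rightarrow> 'e (product topologies, Borel sigma-algebras).\<close>

definition Sn :: "((nat \<Rightarrow> 'e) \<Rightarrow> real) \<Rightarrow> nat \<Rightarrow> (nat \<Rightarrow> 'e) \<Rightarrow> real" where
  "Sn \<phi> n z = (\<Sum>k<n. \<phi> (\<lambda>j. z (j + k)))"

text \<open>The string x_{-p}^{i-1} a x_{i+1}^\<infinity>, re-indexed so that its first coordinate
  (the one coming from position -p) becomes 0.\<close>
definition splice :: "(int \<Rightarrow> 'e) \<Rightarrow> int \<Rightarrow> 'e \<Rightarrow> nat \<Rightarrow> (nat \<Rightarrow> 'e)" where
  "splice x i a p = (\<lambda>k. if int k - int p = i then a else x (int k - int p))"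

definition extensible :: "((nat \<Rightarrow> 'e) \<Rightarrow> real) \<Rightarrow> bool" where
  "extensible \<phi> \<longleftrightarrow> (\<forall>a0 b0. uniformly_convergent_on UNIV
      (\<lambda>n (x :: int \<Rightarrow> 'e). \<Sum>i\<le>n. (\<phi> (splice x 0 b0 i) - \<phi> (splice x 0 a0 i))))"

definition coord_algebra :: "'i set \<Rightarrow> ('i \<Rightarrow> 'e) measure" where
  "coord_algebra J = sigma UNIV {{y. y j = b} | j b. j \<in> J}"

definition half_line_gibbs :: "((nat \<Rightarrow> 'e::{finite,discrete_topology}) \<Rightarrow> real) \<Rightarrow> (nat \<Rightarrow> 'e) measure \<Rightarrow> bool" where
  "half_line_gibbs \<phi> \<nu> \<longleftrightarrow> prob_space \<nu> \<and> sets \<nu> = sets borel \<and>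
     (\<forall>n\<ge>1. \<forall>a :: nat \<Rightarrow> 'e. AE x in \<nu>.
        real_cond_exp \<nu> (coord_algebra {n..}) (indicator {y. \<forall>k<n. y k = a k}) x
        = exp (Sn \<phi> n (\<lambda>k. if k < n then a k else x k))
          / (\<Sum>b\<in>Pi\<^sub>E {..<n} (\<lambda>_. UNIV). exp (Sn \<phi> n (\<lambda>k. if k < n then b k else x k))))"

definition gamma :: "((nat \<Rightarrow> 'e::{finite,discrete_topology}) \<Rightarrow> real) \<Rightarrow> int \<Rightarrow> 'e \<Rightarrow> (int \<Rightarrow> 'e) \<Rightarrow> real" where
  "gamma \<phi> i a x = lim (\<lambda>p. exp (Sn \<phi> (nat (i + int p + 1)) (splice x i a p))
      / (\<Sum>b\<in>UNIV. exp (Sn \<phi> (nat (i + int p + 1)) (splice x i b p))))"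

definition whole_line_gibbs :: "((nat \<Rightarrow> 'e::{finite,discrete_topology}) \<Rightarrow> real) \<Rightarrow> (int \<Rightarrow> 'e) measure \<Rightarrow> bool" where
  "whole_line_gibbs \<phi> \<mu> \<longleftrightarrow> prob_space \<mu> \<and> sets \<mu> = sets borel \<and>
     (\<forall>i a. AE x in \<mu>. real_cond_exp \<mu> (coord_algebra (- {i})) (indicator {y. y i = a}) x = gamma \<phi> i a x)"

text \<open>Uniform Bernoulli measure on X_- = E^{-N}, coordinate k standing for position -(k+1).\<close>
definition rho :: "(nat \<Rightarrow> 'e::{finite,discrete_topology}) measure" where
  "rho = PiM UNIV (\<lambda>_. measure_pmf (pmf_of_set UNIV))"

definition glue :: "(nat \<Rightarrow> 'e) \<times> (nat \<Rightarrow> 'e) \<Rightarrow> (int \<Rightarrow> 'e)" where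
  "glue uv = (\<lambda>i. if i < 0 then fst uv (nat (- i - 1)) else snd uv (nat i))"

text \<open>mu_0 = rho \<times> nu on X = X_- \<times> X_+, and mu_n = mu_0 \<circ> S^{-n}.\<close>
definition mu0 :: "(nat \<Rightarrow> 'e::{finite,discrete_topology}) measure \<Rightarrow> (int \<Rightarrow> 'e) measure" where
  "mu0 \<nu> = distr (rho \<Otimes>\<^sub>M \<nu>) borel glue"

definition mun :: "(nat \<Rightarrow> 'e::{finite,discrete_topology}) measure \<Rightarrow> nat \<Rightarrow> (int \<Rightarrow> 'e) measure" where
  "mun \<nu> n = distr (mu0 \<nu>) borel (\<lambda>x i. x (i + int n))"

definition weak_star_conv :: "(nat \<Rightarrow> (int \<Rightarrow> 'e::{finite,discrete_topology}) measure) \<Rightarrow> (int \<Rightarrow> 'e) measure \<Rightarrow> bool" where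
  "weak_star_conv M \<mu> \<longleftrightarrow> (\<forall>f :: (int \<Rightarrow> 'e) \<Rightarrow> real. continuous_on UNIV f \<longrightarrow>
      (\<lambda>k. integral\<^sup>L (M k) f) \<longlonglongrightarrow> integral\<^sup>L \<mu> f)"

end

(*
  Fix a site i and a finite cylinder event C not involving x_i.  Under mu_n, site i is site
  m = n + i of the nu-half of the configuration, so the half-line Gibbs property of nu on the
  block {0..m}, summed over the value at m, gives
    \<integral> 1_C 1{x_i = a} d mu_n = \<integral> 1_C R_m(a | x) d mu_n,
  where R_m is the finite-volume single-site ratio seen from i.  Extensibility makes R_m converge
  uniformly to a continuous kernel gamma, so the identity passes to the weak-* limit along n_k with
  gamma in place of R_m.  As gamma(a | x) does not depend on x_i and the cylinders avoiding i
  generate the sigma-algebra of the coordinates other than i, gamma is the conditional law of x_i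
  under mu.
*)

theory Submission
  imports Defs
begin

lemma one_le_sum_exp:
  fixes u :: "'e::finite \<Rightarrow> real"
  assumes "u a = 0"
  shows "1 \<le> (\<Sum>b\<in>UNIV. exp (u b))"
  using member_le_sum[of a UNIV "\<lambda>b. exp (u b)"] assms by simp

lemma abs_exp_diff_le: "\<bar>exp u - exp v\<bar> \<le> max (exp u) (exp v) * \<bar>u - v :: real\<bar>"
proof -
  have exp_diff_le: "exp p - exp q \<le> exp p * (p - q)" for p q :: real
  proof -
    have "1 - (p - q) \<le> exp (q - p)"
      using exp_ge_add_one_self[of "q - p"] by linarith
    then have "exp p * (1 - (p - q)) \<le> exp p * exp (q - p)"
      by simp
    then show ?thesis
      by (simp add: algebra_simps flip: exp_add)
  qed
  show ?thesis
    using exp_diff_le[of u v] exp_diff_le[of v u]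
    by (cases "v \<le> u") (auto simp: abs_if max_def)
qed

text \<open>Both sums are at least \<open>exp (u a) = 1\<close>, which is why no constant appears.\<close>

lemma abs_inverse_sum_exp_diff_le:
  fixes u v :: "'e::finite \<Rightarrow> real"
  assumes "u a = 0" "v a = 0"
  shows "\<bar>1 / (\<Sum>b\<in>UNIV. exp (u b)) - 1 / (\<Sum>b\<in>UNIV. exp (v b))\<bar> \<le> (\<Sum>b\<in>UNIV. \<bar>u b - v b\<bar>)"
proof -
  define S where "S = (\<Sum>b\<in>UNIV. exp (u b))"
  define T where "T = (\<Sum>b\<in>UNIV. exp (v b))"
  have S: "1 \<le> S" and T: "1 \<le> T"
    unfolding S_def T_def using one_le_sum_exp assms by blast+
  have "exp (u b) \<le> S" "exp (v b) \<le> T" for b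
    unfolding S_def T_def by (auto intro: member_le_sum)
  then have "max (exp (v b)) (exp (u b)) \<le> S * T" for b
    using S T by (smt (verit) mult_le_cancel_left1 mult_le_cancel_right1)
  then have pointwise: "\<bar>exp (v b) - exp (u b)\<bar> \<le> (S * T) * \<bar>u b - v b\<bar>" for b
    using abs_exp_diff_le[of "v b" "u b"]
    by (smt (verit, best) abs_ge_zero abs_minus_commute mult_right_mono)
  have "\<bar>T - S\<bar> = \<bar>\<Sum>b\<in>UNIV. exp (v b) - exp (u b)\<bar>"
    by (simp add: S_def T_def sum_subtractf)
  also have "\<dots> \<le> (\<Sum>b\<in>UNIV. (S * T) * \<bar>u b - v b\<bar>)"
    using order_trans[OF sum_abs sum_mono] pointwise by meson
  finally have "\<bar>T - S\<bar> \<le> (S * T) * (\<Sum>b\<in>UNIV. \<bar>u b - v b\<bar>)"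
    by (simp add: sum_distrib_left)
  moreover have "\<bar>1 / S - 1 / T\<bar> = \<bar>T - S\<bar> / (S * T)"
    using S T by (simp add: field_simps abs_div)
  ultimately show ?thesis
    using S T unfolding S_def T_def by (simp add: divide_le_eq mult.commute)
qed

lemma abs_mult_le_of_abs_le_1:
  assumes "\<bar>x\<bar> \<le> B" "\<bar>y\<bar> \<le> 1"
  shows "\<bar>x * y :: real\<bar> \<le> B"
proof -
  have "\<bar>x\<bar> * \<bar>y\<bar> \<le> \<bar>x\<bar>"
    using assms(2) by (intro mult_left_le) auto
  then show ?thesis
    using assms(1) by (simp add: abs_mult)
qed

lemma (in finite_measure) integrable_abs_bounded:
  "f \<in> borel_measurable M \<Longrightarrow> (\<And>x. \<bar>f x\<bar> \<le> B) \<Longrightarrow> integrable M (f :: _ \<Rightarrow> real)"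
  by (rule integrable_const_bound[of _ B]) auto

lemma (in prob_space) abs_integral_diff_le:
  assumes "integrable M f" "integrable M g" "\<And>x. \<bar>f x - g x\<bar> \<le> (e :: real)"
  shows "\<bar>(\<integral>x. f x \<partial>M) - (\<integral>x. g x \<partial>M)\<bar> \<le> e"
proof -
  have "\<bar>\<integral>x. f x - g x \<partial>M\<bar> \<le> (\<integral>x. \<bar>f x - g x\<bar> \<partial>M)"
    by (rule integral_abs_bound)
  also have "\<dots> \<le> (\<integral>x. e \<partial>M)"
    using assms(3) by (intro integral_mono integrable_abs Bochner_Integration.integrable_diff assms(1,2)) auto
  finally have "\<bar>\<integral>x. f x - g x \<partial>M\<bar> \<le> e"
    by (simp add: prob_space)
  then show ?thesis
    using assms(1,2) by (simp add: Bochner_Integration.integral_diff)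
qed

text \<open>Both sides are sums over \<open>W \<times> UNIV\<close> in disguise, exchanged by the involution
  \<open>(w, b) \<mapsto> (w(m := b), w m)\<close>.\<close>

lemma sum_resample_site:
  fixes E c :: "('i \<Rightarrow> 'e::finite) \<Rightarrow> real"
  assumes W: "finite W" "\<And>w b. w \<in> W \<Longrightarrow> w(m := b) \<in> W"
    and c: "\<And>w b. w \<in> W \<Longrightarrow> c (w(m := b)) = c w"
    and E: "\<And>w. E w > 0"
  shows "(\<Sum>w\<in>W. c w * (if w m = a then 1 else 0) * E w)
       = (\<Sum>w\<in>W. c w * (E (w(m := a)) / (\<Sum>b\<in>UNIV. E (w(m := b)))) * E w)"
proof -
  define T where "T w = (\<Sum>b\<in>UNIV. E (w(m := b)))" for w
  have T_pos: "T w > 0" for w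
    unfolding T_def using E by (intro sum_pos) auto
  have T_upd: "T (w(m := b)) = T w" for w b
    unfolding T_def by simp
  define F where "F p = c (fst p) * (if fst p m = a then 1 else 0) * E (fst p) * E ((fst p)(m := snd p)) / T (fst p)"
    for p
  have "(\<Sum>w\<in>W. c w * (if w m = a then 1 else 0) * E w) = (\<Sum>w\<in>W. \<Sum>b\<in>UNIV. F (w, b))"
  proof (rule sum.cong[OF refl])
    fix w
    have "(\<Sum>b\<in>UNIV. F (w, b)) = c w * (if w m = a then 1 else 0) * E w * T w / T w"
      unfolding F_def T_def by (simp add: sum_distrib_left sum_divide_distrib)
    then show "c w * (if w m = a then 1 else 0) * E w = (\<Sum>b\<in>UNIV. F (w, b))"
      using T_pos[of w] by simp
  qed
  also have "\<dots> = (\<Sum>p\<in>W \<times> UNIV. F p)"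
    by (simp add: sum.cartesian_product)
  also have "\<dots> = (\<Sum>p\<in>W \<times> UNIV. F ((fst p)(m := snd p), fst p m))"
    by (rule sum.reindex_bij_witness[where i = "\<lambda>p. ((fst p)(m := snd p), fst p m)"
          and j = "\<lambda>p. ((fst p)(m := snd p), fst p m)"]) (auto simp: W)
  also have "\<dots> = (\<Sum>w\<in>W. \<Sum>b\<in>UNIV. F (w(m := b), w m))"
    by (simp add: sum.cartesian_product split_beta)
  also have "\<dots> = (\<Sum>w\<in>W. c w * (E (w(m := a)) / T w) * E w)"
  proof (rule sum.cong[OF refl])
    fix w assume "w \<in> W"
    then have "F (w(m := b), w m) = (if b = a then c w * E (w(m := a)) * E w / T w else 0)" for b
      unfolding F_def using c by (simp add: T_upd)
    then show "(\<Sum>b\<in>UNIV. F (w(m := b), w m)) = c w * (E (w(m := a)) / T w) * E w"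
      by simp
  qed
  finally show ?thesis
    unfolding T_def .
qed

lemma sum_exp_PiE_pos:
  "finite I \<Longrightarrow> 0 < (\<Sum>b\<in>Pi\<^sub>E I (\<lambda>_. UNIV :: 'e::finite set). exp (f b :: real))"
  by (intro sum_pos) (simp_all add: finite_PiE PiE_eq_empty_iff)

lemma filterlim_nat_int_add: "filterlim (\<lambda>n. nat (int n + i)) sequentially sequentially"
  unfolding filterlim_at_top
proof
  fix Z :: nat
  show "\<forall>\<^sub>F n in sequentially. Z \<le> nat (int n + i)"
    using eventually_ge_at_top[of "nat (int Z - i)"] by eventually_elim auto
qed

section \<open>Cylinders and coordinate \<sigma>-algebras\<close>

definition cyl :: "('i \<times> 'e) set \<Rightarrow> ('i \<Rightarrow> 'e) set" where
  "cyl S = {y. \<forall>(j, b)\<in>S. y j = b}"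

definition coord_events :: "'i set \<Rightarrow> ('i \<Rightarrow> 'e) set set" where
  "coord_events J = {{y. y j = b} | j b. j \<in> J}"

lemma cyl_eq_INT: "cyl S = (\<Inter>p\<in>S. {y. y (fst p) = snd p})"
  unfolding cyl_def by fastforce

lemma cyl_Int_cyl: "cyl S \<inter> cyl T = cyl (S \<union> T)"
  by (simp add: cyl_def ball_Un Collect_conj_eq)

lemma cyl_fun_upd:
  assumes "i \<notin> fst ` S"
  shows "y(i := b) \<in> cyl S \<longleftrightarrow> y \<in> cyl S"
  using assms unfolding cyl_def by force

lemma open_coord: "open {y :: 'i \<Rightarrow> 'e::discrete_topology. y j = b}"
proof -
  have "open ((\<lambda>y :: 'i \<Rightarrow> 'e. y j) -` {b})"
    by (intro open_vimage continuous_on_product_coordinates Topological_Spaces.open_discrete)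
  then show ?thesis by (simp add: vimage_def)
qed

lemma closed_coord: "closed {y :: 'i \<Rightarrow> 'e::discrete_topology. y j = b}"
proof -
  have "closed ((\<lambda>y :: 'i \<Rightarrow> 'e. y j) -` {b})"
    by (intro closed_vimage continuous_on_product_coordinates closed_singleton)
  then show ?thesis by (simp add: vimage_def)
qed

lemma open_cyl: "finite S \<Longrightarrow> open (cyl (S :: ('i \<times> 'e::discrete_topology) set))"
  unfolding cyl_eq_INT by (intro open_INT) (auto intro: open_coord)

lemma closed_cyl: "closed (cyl (S :: ('i \<times> 'e::discrete_topology) set))"
  unfolding cyl_eq_INT by (intro closed_INT) (auto intro: closed_coord)

lemma open_eq_Union_cyl:
  fixes U :: "('i \<Rightarrow> 'e::discrete_topology) set"
  assumes "open U"
  shows "U = \<Union>(cyl ` {S. finite S \<and> cyl S \<subseteq> U})"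
proof
  show "U \<subseteq> \<Union>(cyl ` {S. finite S \<and> cyl S \<subseteq> U})"
  proof
    fix x assume "x \<in> U"
    have "openin (product_topology (\<lambda>i. euclidean) UNIV) U"
      using assms unfolding open_fun_def by auto
    from product_topology_open_contains_basis[OF this \<open>x \<in> U\<close>]
    obtain X where X: "x \<in> (\<Pi>\<^sub>E i\<in>UNIV. X i)" "finite {i. X i \<noteq> UNIV}"
        "(\<Pi>\<^sub>E i\<in>UNIV. X i) \<subseteq> U"
      by auto
    define S where "S = (\<lambda>i. (i, x i)) ` {i. X i \<noteq> UNIV}"
    have "cyl S \<subseteq> U"
    proof
      fix y assume "y \<in> cyl S"
      have "y \<in> (\<Pi>\<^sub>E i\<in>UNIV. X i)"
      proof (auto simp: PiE_iff)
        fix i show "y i \<in> X i"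
        proof (cases "X i = UNIV")
          case False
          then have "y i = x i" using \<open>y \<in> cyl S\<close> by (auto simp: S_def cyl_def)
          then show ?thesis using X(1) by auto
        qed auto
      qed
      then show "y \<in> U" using X(3) by auto
    qed
    moreover have "finite S" "x \<in> cyl S"
      using X(2) by (auto simp: S_def cyl_def)
    ultimately show "x \<in> \<Union>(cyl ` {S. finite S \<and> cyl S \<subseteq> U})" by auto
  qed
qed auto

lemma continuous_on_indicator_clopen:
  assumes "open A" "closed A"
  shows "continuous_on UNIV (indicator A :: _ \<Rightarrow> real)"
  unfolding continuous_on_open_vimage[OF open_UNIV]
proof (intro allI impI)
  fix B :: "real set" assume "open B"
  have "indicator A -` B \<inter> UNIV = (if 1 \<in> B then A else {}) \<union> (if 0 \<in> B then -A else {})"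
    by (auto simp: indicator_def of_bool_def split: if_splits)
  then show "open (indicator A -` B \<inter> UNIV)"
    using assms by (auto simp: closed_def)
qed

lemma continuous_on_indicator_cyl:
  "finite S \<Longrightarrow> continuous_on UNIV (indicator (cyl (S :: ('i \<times> 'e::discrete_topology) set)) :: _ \<Rightarrow> real)"
  by (intro continuous_on_indicator_clopen open_cyl closed_cyl)

lemma continuous_on_indicator_coord:
  "continuous_on UNIV (indicator {y :: 'i \<Rightarrow> 'e::discrete_topology. y j = b} :: _ \<Rightarrow> real)"
  by (intro continuous_on_indicator_clopen open_coord closed_coord)

lemma continuous_on_shift: "continuous_on UNIV (\<lambda>x :: 'i::plus \<Rightarrow> 'e::topological_space. \<lambda>j. x (j + i))"
  by (intro continuous_on_coordinatewise_then_product) simp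

lemma measurable_shift: "(\<lambda>x j. x (j + c)) \<in> measurable borel (borel :: (int \<Rightarrow> 'e::topological_space) measure)"
  by (rule borel_measurable_continuous_onI[OF continuous_on_shift])

lemma sets_coord_algebra: "sets (coord_algebra J) = sigma_sets UNIV (coord_events J)"
  unfolding coord_algebra_def coord_events_def by (rule sets_measure_of) auto

lemma space_coord_algebra [simp]: "space (coord_algebra J) = UNIV"
  unfolding coord_algebra_def by (rule space_measure_of) auto

lemma cyl_in_sigma_sets_coord_events:
  assumes "finite S" "fst ` S \<subseteq> J"
  shows "cyl S \<in> sigma_sets UNIV (coord_events J)"
proof -
  interpret sigma_algebra UNIV "sigma_sets UNIV (coord_events J)"
    by (rule sigma_algebra_sigma_sets) auto
  have "{y. y (fst p) = snd p} \<in> sigma_sets UNIV (coord_events J)" if "p \<in> S" for p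
    using that assms(2) by (intro sigma_sets.Basic) (auto simp: coord_events_def)
  then show ?thesis
    unfolding cyl_eq_INT using assms(1) by (cases "S = {}") (auto intro!: finite_INT)
qed

lemma sets_borel_eq_coord_events:
  "sets (borel :: ('i::countable \<Rightarrow> 'e::{finite,discrete_topology}) measure)
     = sigma_sets UNIV (coord_events UNIV)"
proof -
  interpret S: sigma_algebra "UNIV :: ('i \<Rightarrow> 'e) set" "sigma_sets UNIV (coord_events UNIV)"
    by (rule sigma_algebra_sigma_sets) auto
  have open_in: "U \<in> sigma_sets UNIV (coord_events UNIV)" if "open U" for U :: "('i \<Rightarrow> 'e) set"
  proof -
    \<comment> \<open>only countably many finite cylinders exist, as \<open>'i\<close> is countable and \<open>'e\<close> finite\<close>
    have "countable {S :: ('i \<times> 'e) set. finite S \<and> cyl S \<subseteq> U}"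
      by (rule countable_subset[OF _ countable_Collect_finite]) auto
    then have "\<Union>(cyl ` {S. finite S \<and> cyl S \<subseteq> U}) \<in> sigma_sets UNIV (coord_events UNIV)"
      by (intro S.countable_Union) (auto intro!: cyl_in_sigma_sets_coord_events)
    then show ?thesis
      using open_eq_Union_cyl[OF that] by simp
  qed
  have "sigma_sets UNIV (Collect open) \<subseteq> sigma_sets UNIV (coord_events UNIV :: ('i \<Rightarrow> 'e) set set)"
    by (rule S.sigma_sets_subset) (auto intro: open_in)
  moreover have "sigma_sets UNIV (coord_events UNIV) \<subseteq> sigma_sets UNIV (Collect open :: ('i \<Rightarrow> 'e) set set)"
    by (rule sigma_sets_mono) (auto simp: coord_events_def open_coord)
  ultimately show ?thesis
    unfolding sets_borel by auto
qed

lemma cyl_in_sets_borel: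
  "finite S \<Longrightarrow> cyl (S :: ('i::countable \<times> 'e::{finite,discrete_topology}) set) \<in> sets borel"
  unfolding sets_borel_eq_coord_events by (rule cyl_in_sigma_sets_coord_events) auto

lemma coord_in_sets_borel:
  "{y :: 'i::countable \<Rightarrow> 'e::{finite,discrete_topology}. y j = b} \<in> sets borel"
  unfolding sets_borel_eq_coord_events by (intro sigma_sets.Basic) (auto simp: coord_events_def)

lemma measurable_to_borel_coordinatewiseI:
  fixes f :: "'a \<Rightarrow> ('i::countable \<Rightarrow> 'e::{finite,discrete_topology})"
  assumes "\<And>j b. {x\<in>space M. f x j = b} \<in> sets M"
  shows "f \<in> measurable M borel"
proof -
  have "f \<in> measurable M (measure_of UNIV (coord_events UNIV) (\<lambda>_. 0))"
  proof (rule measurable_measure_of)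
    fix A :: "('i \<Rightarrow> 'e) set" assume "A \<in> coord_events UNIV"
    then obtain j b where "A = {y. y j = b}"
      by (auto simp: coord_events_def)
    then show "f -` A \<inter> space M \<in> sets M"
      using assms[of j b] by (simp add: Collect_conj_eq Int_commute vimage_def)
  qed auto
  then show ?thesis
    by (simp add: measurable_def space_borel sets_borel_eq_coord_events sets_measure_of_conv coord_events_def)
qed

lemma measurable_coord_algebra_borelI:
  fixes \<tau> :: "('k \<Rightarrow> 'e) \<Rightarrow> ('i::countable \<Rightarrow> 'e::{finite,discrete_topology})"
  assumes "\<And>j. (\<exists>c. \<forall>x. \<tau> x j = c) \<or> (\<exists>k\<in>J. \<forall>x. \<tau> x j = x k)"
  shows "\<tau> \<in> measurable (coord_algebra J) borel"
proof (rule measurable_to_borel_coordinatewiseI)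
  fix j b
  show "{x \<in> space (coord_algebra J). \<tau> x j = b} \<in> sets (coord_algebra J :: ('k \<Rightarrow> 'e) measure)"
  proof (cases "\<exists>c. \<forall>x. \<tau> x j = c")
    case True
    then obtain c where "\<forall>x. \<tau> x j = c" by blast
    then have "{x \<in> space (coord_algebra J). \<tau> x j = b} = (if c = b then UNIV else {})"
      by auto
    then show ?thesis
      using sets.top[of "coord_algebra J :: ('k \<Rightarrow> 'e) measure"] by simp
  next
    case False
    then obtain k where k: "k \<in> J" "\<forall>x. \<tau> x j = x k"
      using assms by blast
    then have "{x \<in> space (coord_algebra J). \<tau> x j = b} = {y. y k = b}" by auto
    also have "\<dots> \<in> sets (coord_algebra J)"
      unfolding sets_coord_algebra using k by (intro sigma_sets.Basic) (auto simp: coord_events_def)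
    finally show ?thesis .
  qed
qed

lemma borel_measurable_coord_algebra_if_invariant:
  fixes f :: "('i::countable \<Rightarrow> 'e::{finite,discrete_topology}) \<Rightarrow> real"
  assumes "f \<in> borel_measurable borel" "\<And>x b. f (x(i := b)) = f x"
  shows "f \<in> borel_measurable (coord_algebra (- {i}))"
proof -
  have "(\<lambda>x. x(i := undefined)) \<in> measurable (coord_algebra (- {i})) (borel :: ('i \<Rightarrow> 'e) measure)"
    by (rule measurable_coord_algebra_borelI) auto
  from measurable_compose[OF this assms(1)] show ?thesis
    using assms(2) by simp
qed

lemma sigma_finite_subalgebra_coord_algebra:
  fixes M :: "('i::countable \<Rightarrow> 'e::{finite,discrete_topology}) measure"
  assumes "finite_measure M" "sets M = sets borel"
  shows "sigma_finite_subalgebra M (coord_algebra J)"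
proof (rule finite_measure_subalgebra_is_sigma_finite)
  have "sets (coord_algebra J) \<subseteq> sets M"
    unfolding assms(2) sets_coord_algebra sets_borel_eq_coord_events
    by (rule sigma_sets_mono) (auto simp: coord_events_def intro: sigma_sets.Basic)
  moreover have "space M = UNIV"
    using sets_eq_imp_space_eq[OF assms(2)] by simp
  ultimately show "finite_measure_subalgebra M (coord_algebra J)"
    using assms(1)
    by (auto simp: finite_measure_subalgebra_def finite_measure_subalgebra_axioms_def subalgebra_def)
qed

lemma integral_indicator_mult_eq_sigma_sets:
  fixes f g :: "'a \<Rightarrow> real"
  assumes C: "Int_stable C" "C \<subseteq> sets M"
    and f: "integrable M f" and g: "integrable M g"
    and space_eq: "(\<integral>x. f x \<partial>M) = (\<integral>x. g x \<partial>M)"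
    and C_eq: "\<And>A. A \<in> C \<Longrightarrow> (\<integral>x. indicator A x * f x \<partial>M) = (\<integral>x. indicator A x * g x \<partial>M)"
    and A: "A \<in> sigma_sets (space M) C"
  shows "(\<integral>x. indicator A x * f x \<partial>M) = (\<integral>x. indicator A x * g x \<partial>M)"
proof -
  have sigma_C: "sigma_sets (space M) C \<subseteq> sets M"
    by (rule sets.sigma_sets_subset[OF C(2)])
  have integrable_indicator: "integrable M (\<lambda>x. indicator A x * h x)"
    if "A \<in> sets M" "integrable M h" for A and h :: "_ \<Rightarrow> real"
    using integrable_mult_indicator[OF that] by simp
  show ?thesis
    using C(1) order_trans[OF C(2) sets.space_closed] A
  proof (induct rule: sigma_sets_induct_disjoint)
    case (compl A)
    have A: "A \<in> sets M" using compl(1) sigma_C by blast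
    have indicator_diff: "(\<integral>x. indicator (space M - A) x * h x \<partial>M)
        = (\<integral>x. h x \<partial>M) - (\<integral>x. indicator A x * h x \<partial>M)" if "integrable M h" for h :: "_ \<Rightarrow> real"
    proof -
      have "(\<integral>x. indicator (space M - A) x * h x \<partial>M) = (\<integral>x. h x - indicator A x * h x \<partial>M)"
        by (rule Bochner_Integration.integral_cong) (auto simp: indicator_def)
      then show ?thesis
        using that by (simp add: Bochner_Integration.integral_diff integrable_indicator[OF A])
    qed
    show ?case
      using compl(2) space_eq by (simp add: indicator_diff f g)
  next
    case (union A)
    have A: "A n \<in> sets M" for n using union(2) sigma_C by auto
    have disj: "A m \<inter> A n = {}" if "m \<noteq> n" for m n
      using union(1) that by (auto simp: disjoint_family_on_def)
    have countable_add: "(\<integral>x. indicator (\<Union>n. A n) x * h x \<partial>M) = (\<Sum>n. \<integral>x. indicator (A n) x * h x \<partial>M)"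
      if "integrable M h" for h :: "_ \<Rightarrow> real"
    proof -
      have "set_integrable M (\<Union>n. A n) h"
        unfolding set_integrable_def using integrable_indicator[OF _ that] A by auto
      from lebesgue_integral_countable_add[OF A disj this]
      show ?thesis unfolding set_lebesgue_integral_def by simp
    qed
    show ?case
      unfolding countable_add[OF f] countable_add[OF g] using union(3) by simp
  qed (auto intro: C_eq)
qed

lemma real_cond_exp_coord_algebra_eqI:
  fixes M :: "('i::countable \<Rightarrow> 'e::{finite,discrete_topology}) measure"
  assumes M: "finite_measure M" "sets M = sets borel"
    and f: "integrable M f" and g: "integrable M g" and g_meas: "g \<in> borel_measurable (coord_algebra J)"
    and cyl_eq: "\<And>S. finite S \<Longrightarrow> fst ` S \<subseteq> J \<Longrightarrow>
      (\<integral>x. indicator (cyl S) x * f x \<partial>M) = (\<integral>x. indicator (cyl S) x * g x \<partial>M)"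
  shows "AE x in M. real_cond_exp M (coord_algebra J) f x = g x"
proof -
  interpret sigma_finite_subalgebra M "coord_algebra J"
    by (rule sigma_finite_subalgebra_coord_algebra[OF M])
  have space: "space M = UNIV"
    using sets_eq_imp_space_eq[OF M(2)] by simp
  define C :: "('i \<Rightarrow> 'e) set set" where "C = {cyl S | S. finite S \<and> fst ` S \<subseteq> J}"
  have C_stable: "Int_stable C"
  proof (rule Int_stableI)
    fix A B assume "A \<in> C" "B \<in> C"
    then obtain S T where "A = cyl S" "B = cyl T" "finite S" "finite T" "fst ` S \<subseteq> J" "fst ` T \<subseteq> J"
      by (auto simp: C_def)
    then show "A \<inter> B \<in> C"
      unfolding C_def by (intro CollectI exI[of _ "S \<union> T"]) (auto simp: cyl_Int_cyl)
  qed
  have C_sets: "C \<subseteq> sets M"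
    unfolding C_def M(2) using cyl_in_sets_borel by blast
  have space_eq: "(\<integral>x. f x \<partial>M) = (\<integral>x. g x \<partial>M)"
    using cyl_eq[of "{}"] by (simp add: cyl_def)
  have C_eq: "(\<integral>x. indicator A x * f x \<partial>M) = (\<integral>x. indicator A x * g x \<partial>M)" if "A \<in> C" for A
  proof -
    from that obtain S where "A = cyl S" "finite S" "fst ` S \<subseteq> J"
      by (auto simp: C_def)
    then show ?thesis using cyl_eq by simp
  qed
  have "sets (coord_algebra J) \<subseteq> sigma_sets (space M) C"
    unfolding sets_coord_algebra space
  proof (intro sigma_sets_mono subsetI)
    fix A :: "('i \<Rightarrow> 'e) set" assume "A \<in> coord_events J"
    then obtain j b where "A = cyl {(j, b)}" "j \<in> J"
      by (auto simp: coord_events_def cyl_def)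
    then show "A \<in> sigma_sets UNIV C"
      unfolding C_def by (intro sigma_sets.Basic) auto
  qed
  then have "(\<integral>x. indicator A x * f x \<partial>M) = (\<integral>x. indicator A x * g x \<partial>M)"
    if "A \<in> sets (coord_algebra J)" for A
    using integral_indicator_mult_eq_sigma_sets[OF C_stable C_sets f g space_eq C_eq] that by blast
  then show ?thesis
    by (intro real_cond_exp_charact f g g_meas) (simp add: set_lebesgue_integral_def)
qed

section \<open>The single-site kernel\<close>

definition ext_sum :: "((nat \<Rightarrow> 'e) \<Rightarrow> real) \<Rightarrow> 'e \<Rightarrow> 'e \<Rightarrow> nat \<Rightarrow> (int \<Rightarrow> 'e) \<Rightarrow> real" where
  "ext_sum \<phi> a b n x = (\<Sum>i\<le>n. \<phi> (splice x 0 b i) - \<phi> (splice x 0 a i))"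

definition ext_limit :: "((nat \<Rightarrow> 'e) \<Rightarrow> real) \<Rightarrow> 'e \<Rightarrow> 'e \<Rightarrow> (int \<Rightarrow> 'e) \<Rightarrow> real" where
  "ext_limit \<phi> a b x = lim (\<lambda>n. ext_sum \<phi> a b n x)"

definition site_ratio :: "((nat \<Rightarrow> 'e::finite) \<Rightarrow> real) \<Rightarrow> nat \<Rightarrow> 'e \<Rightarrow> (int \<Rightarrow> 'e) \<Rightarrow> real" where
  "site_ratio \<phi> n a x =
     exp (Sn \<phi> (n + 1) (splice x 0 a n)) / (\<Sum>b\<in>UNIV. exp (Sn \<phi> (n + 1) (splice x 0 b n)))"

definition site_kernel :: "((nat \<Rightarrow> 'e::finite) \<Rightarrow> real) \<Rightarrow> 'e \<Rightarrow> (int \<Rightarrow> 'e) \<Rightarrow> real" where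
  "site_kernel \<phi> a x = 1 / (\<Sum>b\<in>UNIV. exp (ext_limit \<phi> a b x))"

lemma ext_sum_self [simp]: "ext_sum \<phi> a a n x = 0"
  by (simp add: ext_sum_def)

lemma ext_limit_self [simp]: "ext_limit \<phi> a a x = 0"
  by (simp add: ext_limit_def)

lemma Sn_splice_0: "Sn \<phi> (n + 1) (splice x 0 b n) = (\<Sum>i\<le>n. \<phi> (splice x 0 b i))"
proof -
  have shift: "(\<lambda>j. splice x 0 b n (j + k)) = splice x 0 b (n - k)" if "k \<le> n" for k
    using that by (auto simp: splice_def fun_eq_iff of_nat_diff algebra_simps)
  have "Sn \<phi> (n + 1) (splice x 0 b n) = (\<Sum>k<Suc n. \<phi> (splice x 0 b (n - k)))"
    unfolding Sn_def by (intro sum.cong) (auto simp: shift)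
  also have "\<dots> = (\<Sum>k<Suc n. \<phi> (splice x 0 b k))"
    using sum.nat_diff_reindex[of "\<lambda>k. \<phi> (splice x 0 b k)" "Suc n"] by simp
  finally show ?thesis
    by (simp add: lessThan_Suc_atMost)
qed

lemma site_ratio_eq_ext_sum: "site_ratio \<phi> n a x = 1 / (\<Sum>b\<in>UNIV. exp (ext_sum \<phi> a b n x))"
proof -
  define A where "A b = (\<Sum>i\<le>n. \<phi> (splice x 0 b i))" for b
  have "site_ratio \<phi> n a x = 1 / (\<Sum>b\<in>UNIV. exp (A b) / exp (A a))"
    unfolding site_ratio_def Sn_splice_0 A_def[symmetric] by (simp add: sum_divide_distrib[symmetric])
  also have "(\<lambda>b. exp (A b) / exp (A a)) = (\<lambda>b. exp (ext_sum \<phi> a b n x))"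
    by (auto simp: ext_sum_def A_def sum_subtractf exp_diff)
  finally show ?thesis .
qed

lemma uniform_limit_ext_sum:
  assumes "extensible \<phi>"
  shows "uniform_limit UNIV (ext_sum \<phi> a b) (ext_limit \<phi> a b) sequentially"
proof -
  have "uniformly_convergent_on UNIV (ext_sum \<phi> a b)"
    using assms unfolding extensible_def ext_sum_def[abs_def] by blast
  then show ?thesis
    unfolding uniformly_convergent_uniform_limit_iff ext_limit_def .
qed

lemma uniform_limit_site_ratio:
  fixes \<phi> :: "(nat \<Rightarrow> 'e::finite) \<Rightarrow> real"
  assumes "extensible \<phi>"
  shows "uniform_limit UNIV (\<lambda>n. site_ratio \<phi> n a) (site_kernel \<phi> a) sequentially"
  unfolding uniform_limit_iff
proof (intro allI impI)
  fix e :: real assume "e > 0"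
  define e' where "e' = e / real CARD('e)"
  have "e' > 0"
    using \<open>e > 0\<close> by (simp add: e'_def)
  then have "\<forall>\<^sub>F n in sequentially. \<forall>b x. \<bar>ext_sum \<phi> a b n x - ext_limit \<phi> a b x\<bar> < e'"
    using uniform_limit_ext_sum[OF assms] unfolding uniform_limit_iff dist_real_def
    by (intro eventually_all_finite) auto
  then show "\<forall>\<^sub>F n in sequentially. \<forall>x\<in>UNIV. dist (site_ratio \<phi> n a x) (site_kernel \<phi> a x) < e"
  proof eventually_elim
    case (elim n)
    show ?case
    proof
      fix x
      have "dist (site_ratio \<phi> n a x) (site_kernel \<phi> a x)
          \<le> (\<Sum>b\<in>UNIV. \<bar>ext_sum \<phi> a b n x - ext_limit \<phi> a b x\<bar>)"
        unfolding dist_real_def site_ratio_eq_ext_sum site_kernel_def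
        by (rule abs_inverse_sum_exp_diff_le[where a = a]) auto
      also have "\<dots> < (\<Sum>b\<in>(UNIV :: 'e set). e')"
        using elim by (intro sum_strict_mono) auto
      also have "\<dots> = e"
        by (simp add: e'_def)
      finally show "dist (site_ratio \<phi> n a x) (site_kernel \<phi> a x) < e" .
    qed
  qed
qed

lemma site_ratio_tendsto:
  "extensible \<phi> \<Longrightarrow> (\<lambda>n. site_ratio \<phi> n a x) \<longlonglongrightarrow> site_kernel \<phi> a x"
  using tendsto_uniform_limitI[OF uniform_limit_site_ratio] by blast

lemma abs_site_ratio_le_1: "\<bar>site_ratio \<phi> n a x\<bar> \<le> 1"
proof -
  have "1 \<le> (\<Sum>b\<in>UNIV. exp (ext_sum \<phi> a b n x))"
    by (rule one_le_sum_exp[where a = a]) simp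
  then show ?thesis
    unfolding site_ratio_eq_ext_sum by simp
qed

lemma abs_site_kernel_le_1: "\<bar>site_kernel \<phi> a x\<bar> \<le> 1"
proof -
  have "1 \<le> (\<Sum>b\<in>UNIV. exp (ext_limit \<phi> a b x))"
    by (rule one_le_sum_exp[where a = a]) simp
  then show ?thesis
    unfolding site_kernel_def by simp
qed

lemma site_kernel_fun_upd_0: "site_kernel \<phi> a (x(0 := c)) = site_kernel \<phi> a x"
proof -
  have "splice (x(0 := c)) 0 b k = splice x 0 b k" for b k
    by (auto simp: splice_def fun_eq_iff)
  then show ?thesis
    unfolding site_kernel_def ext_limit_def ext_sum_def by simp
qed

lemma continuous_on_splice: "continuous_on UNIV (\<lambda>x. splice x i a p)"
  unfolding splice_def
proof (intro continuous_on_coordinatewise_then_product)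
  fix k
  show "continuous_on UNIV (\<lambda>x. if int k - int p = i then a else x (int k - int p))"
    by (cases "int k - int p = i") auto
qed

lemma continuous_on_Sn:
  assumes "continuous_on UNIV \<phi>"
  shows "continuous_on UNIV (Sn \<phi> n)"
  unfolding Sn_def
  by (intro continuous_intros continuous_on_compose2[OF assms continuous_on_shift]) auto

lemma continuous_on_site_ratio:
  assumes "continuous_on UNIV \<phi>"
  shows "continuous_on UNIV (site_ratio \<phi> n a)"
  unfolding site_ratio_def
  by (intro continuous_intros continuous_on_compose2[OF continuous_on_Sn[OF assms] continuous_on_splice])
     (auto simp: sum_pos[THEN less_imp_neq, symmetric])

lemma continuous_on_site_kernel:
  assumes "continuous_on UNIV \<phi>" "extensible \<phi>"
  shows "continuous_on UNIV (site_kernel \<phi> a)"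
proof -
  have "continuous_on UNIV (ext_sum \<phi> a b n)" for b n
    unfolding ext_sum_def
    by (intro continuous_intros continuous_on_compose2[OF assms(1) continuous_on_splice]) auto
  then have "continuous_on UNIV (ext_limit \<phi> a b)" for b
    by (intro uniform_limit_theorem[OF _ uniform_limit_ext_sum[OF assms(2)]]) auto
  moreover have "(\<Sum>b\<in>UNIV. exp (ext_limit \<phi> a b x)) \<noteq> 0" for x
    using one_le_sum_exp[of "\<lambda>b. ext_limit \<phi> a b x" a] by auto
  ultimately show ?thesis
    unfolding site_kernel_def by (intro continuous_intros) auto
qed

lemma gamma_eq_site_kernel:
  assumes "extensible \<phi>"
  shows "gamma \<phi> i a x = site_kernel \<phi> a (\<lambda>j. x (j + i))"
proof -
  define y where "y = (\<lambda>j. x (j + i))"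
  have "\<forall>\<^sub>F p in sequentially. site_ratio \<phi> (nat (int p + i)) a y =
      exp (Sn \<phi> (nat (i + int p + 1)) (splice x i a p)) /
      (\<Sum>b\<in>UNIV. exp (Sn \<phi> (nat (i + int p + 1)) (splice x i b p)))"
    using eventually_ge_at_top[of "nat (- i)"]
  proof eventually_elim
    case (elim p)
    then have "nat (i + int p + 1) = nat (int p + i) + 1"
      "splice x i c p = splice y 0 c (nat (int p + i))" for c
      by (auto simp: splice_def y_def fun_eq_iff)
    then show ?case
      unfolding site_ratio_def by simp
  qed
  moreover have "(\<lambda>p. site_ratio \<phi> (nat (int p + i)) a y) \<longlonglongrightarrow> site_kernel \<phi> a y"
    by (rule filterlim_compose[OF site_ratio_tendsto[OF assms] filterlim_nat_int_add])
  ultimately show ?thesis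
    unfolding gamma_def y_def by (simp add: limI Lim_transform_eventually)
qed

section \<open>Half-line Gibbs measures\<close>

definition prefix_override :: "nat \<Rightarrow> (nat \<Rightarrow> 'e) \<Rightarrow> (nat \<Rightarrow> 'e) \<Rightarrow> (nat \<Rightarrow> 'e)" where
  "prefix_override N w v = (\<lambda>k. if k < N then w k else v k)"

definition block_weight :: "((nat \<Rightarrow> 'e::finite) \<Rightarrow> real) \<Rightarrow> nat \<Rightarrow> (nat \<Rightarrow> 'e) \<Rightarrow> (nat \<Rightarrow> 'e) \<Rightarrow> real" where
  "block_weight \<phi> N w v = exp (Sn \<phi> N (prefix_override N w v))
     / (\<Sum>b\<in>Pi\<^sub>E {..<N} (\<lambda>_. UNIV). exp (Sn \<phi> N (prefix_override N b v)))"

definition half_site_ratio :: "((nat \<Rightarrow> 'e::finite) \<Rightarrow> real) \<Rightarrow> nat \<Rightarrow> 'e \<Rightarrow> (nat \<Rightarrow> 'e) \<Rightarrow> real" where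
  "half_site_ratio \<phi> m a v = exp (Sn \<phi> (m + 1) (v(m := a))) / (\<Sum>b\<in>UNIV. exp (Sn \<phi> (m + 1) (v(m := b))))"

lemma half_line_gibbsD:
  assumes "half_line_gibbs \<phi> \<nu>"
  shows "prob_space \<nu>" "sets \<nu> = sets borel"
    and "N \<ge> 1 \<Longrightarrow> AE v in \<nu>. real_cond_exp \<nu> (coord_algebra {N..}) (indicator {y. \<forall>k<N. y k = w k}) v
                       = block_weight \<phi> N w v"
  using assms unfolding half_line_gibbs_def block_weight_def prefix_override_def by auto

lemma prefix_override_fun_upd:
  "m < N \<Longrightarrow> prefix_override N (w(m := b)) v = (prefix_override N w v)(m := b)"
  by (auto simp: prefix_override_def fun_eq_iff)

lemma continuous_on_prefix_override:
  "continuous_on UNIV (prefix_override N w :: (nat \<Rightarrow> 'e::topological_space) \<Rightarrow> _)"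
  unfolding prefix_override_def
proof (intro continuous_on_coordinatewise_then_product)
  fix k
  show "continuous_on UNIV (\<lambda>v :: nat \<Rightarrow> 'e. if k < N then w k else v k)"
    by (cases "k < N") auto
qed

lemma measurable_prefix_override:
  "prefix_override N w \<in> measurable (coord_algebra {N..}) (borel :: (nat \<Rightarrow> 'e::{finite,discrete_topology}) measure)"
proof (rule measurable_coord_algebra_borelI)
  fix j
  show "(\<exists>c. \<forall>v. prefix_override N w v j = c) \<or> (\<exists>k\<in>{N..}. \<forall>v. prefix_override N w v j = v k)"
  proof (cases "j < N")
    case True
    then show ?thesis by (intro disjI1 exI[of _ "w j"]) (simp add: prefix_override_def)
  next
    case False
    then show ?thesis by (intro disjI2 bexI[of _ j]) (auto simp: prefix_override_def)
  qed
qed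

lemma block_weight_nonneg: "0 \<le> block_weight \<phi> N w v"
  unfolding block_weight_def by (simp add: sum_exp_PiE_pos less_imp_le)

lemma block_weight_le_1:
  assumes "w \<in> Pi\<^sub>E {..<N} (\<lambda>_. UNIV)"
  shows "block_weight \<phi> N w v \<le> 1"
  unfolding block_weight_def divide_le_eq_1_pos[OF sum_exp_PiE_pos[OF finite_lessThan]]
  by (rule member_le_sum) (simp_all add: assms finite_PiE)

lemma continuous_on_block_weight:
  assumes "continuous_on UNIV \<phi>"
  shows "continuous_on UNIV (block_weight \<phi> N w)"
proof -
  have "(\<Sum>b\<in>Pi\<^sub>E {..<N} (\<lambda>_. UNIV). exp (Sn \<phi> N (prefix_override N b v))) \<noteq> 0" for v
    using sum_exp_PiE_pos[OF finite_lessThan] by (metis less_irrefl)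
  then show ?thesis
    unfolding block_weight_def
    by (intro continuous_intros continuous_on_compose2[OF continuous_on_Sn[OF assms] continuous_on_prefix_override])
       auto
qed

lemma abs_half_site_ratio_le_1: "\<bar>half_site_ratio \<phi> m a v\<bar> \<le> 1"
proof -
  have "exp (Sn \<phi> (m + 1) (v(m := a))) \<le> (\<Sum>b\<in>UNIV. exp (Sn \<phi> (m + 1) (v(m := b))))"
    by (rule member_le_sum) auto
  moreover have "0 < (\<Sum>b\<in>UNIV. exp (Sn \<phi> (m + 1) (v(m := b))))"
    by (intro sum_pos) auto
  ultimately show ?thesis
    unfolding half_site_ratio_def by (simp add: abs_div)
qed

lemma continuous_on_half_site_ratio:
  fixes \<phi> :: "(nat \<Rightarrow> 'e::{finite,topological_space}) \<Rightarrow> real"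
  assumes "continuous_on UNIV \<phi>"
  shows "continuous_on UNIV (half_site_ratio \<phi> m a)"
proof -
  have "continuous_on UNIV (\<lambda>v::nat \<Rightarrow> 'e. v(m := b))" for b
  proof (intro continuous_on_coordinatewise_then_product)
    fix k
    show "continuous_on UNIV (\<lambda>v::nat \<Rightarrow> 'e. (v(m := b)) k)"
      by (cases "k = m") auto
  qed
  then have Sn_upd: "continuous_on UNIV (\<lambda>v. Sn \<phi> (m + 1) (v(m := b)))" for b
    by (rule continuous_on_compose2[OF continuous_on_Sn[OF assms]]) auto
  show ?thesis
    unfolding half_site_ratio_def
    by (intro continuous_on_divide continuous_on_sum continuous_on_exp Sn_upd)
       (auto simp: sum_pos[THEN less_imp_neq, symmetric])
qed

lemma sum_prefix_indicator:
  fixes H :: "(nat \<Rightarrow> 'e::finite) \<Rightarrow> real"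
  shows "H v = (\<Sum>w\<in>Pi\<^sub>E {..<N} (\<lambda>_. UNIV).
                  indicator {y. \<forall>k<N. y k = w k} v * H (prefix_override N w v))"
proof -
  let ?W = "Pi\<^sub>E {..<N} (\<lambda>_. UNIV) :: (nat \<Rightarrow> 'e) set"
  have "indicator {y. \<forall>k<N. y k = w k} v * H (prefix_override N w v)
      = (if w = restrict v {..<N} then H v else 0)" if "w \<in> ?W" for w
  proof (cases "w = restrict v {..<N}")
    case True
    then have "prefix_override N w v = v"
      by (auto simp: prefix_override_def)
    with True show ?thesis
      by (simp add: indicator_def)
  next
    case False
    then have "\<not> (\<forall>k<N. v k = w k)"
      using that by (auto simp: fun_eq_iff PiE_iff extensional_def split: if_splits)
    with False show ?thesis
      by (simp add: indicator_def)
  qed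
  then show ?thesis
    by (simp add: finite_PiE cong: sum.cong)
qed

lemma prefix_in_sets_borel:
  "{y :: nat \<Rightarrow> 'e::{finite,discrete_topology}. \<forall>k<N. y k = w k} \<in> sets borel"
proof -
  have "{y :: nat \<Rightarrow> 'e. \<forall>k<N. y k = w k} = cyl ((\<lambda>k. (k, w k)) ` {..<N})"
    by (auto simp: cyl_def)
  then show ?thesis
    using cyl_in_sets_borel[of "(\<lambda>k. (k, w k)) ` {..<N}"] by simp
qed

lemma half_line_gibbs_integral_prefix:
  fixes \<nu> :: "(nat \<Rightarrow> 'e::{finite,discrete_topology}) measure"
  assumes hg: "half_line_gibbs \<phi> \<nu>" and cont: "continuous_on UNIV \<phi>" and "N \<ge> 1"
    and H: "H \<in> borel_measurable borel" "\<And>v. \<bar>H v\<bar> \<le> B"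
  shows "(\<integral>v. indicator {y. \<forall>k<N. y k = w k} v * H (prefix_override N w v) \<partial>\<nu>)
       = (\<integral>v. H (prefix_override N w v) * block_weight \<phi> N w v \<partial>\<nu>)"
proof -
  let ?P = "indicator {y. \<forall>k<N. y k = w k} :: _ \<Rightarrow> real"
  let ?F = "coord_algebra {N..} :: (nat \<Rightarrow> 'e) measure"
  interpret prob_space \<nu> using half_line_gibbsD(1)[OF hg] .
  have sets_eq: "sets \<nu> = sets borel" using half_line_gibbsD(2)[OF hg] .
  interpret sigma_finite_subalgebra \<nu> ?F
    by (rule sigma_finite_subalgebra_coord_algebra[OF finite_measure_axioms sets_eq])
  have meas: "measurable \<nu> = measurable borel"
    by (intro ext measurable_cong_sets[OF sets_eq refl])
  have P_meas: "?P \<in> borel_measurable \<nu>"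
    unfolding meas using prefix_in_sets_borel by (rule borel_measurable_indicator)
  have H_override: "(\<lambda>v. H (prefix_override N w v)) \<in> borel_measurable \<nu>"
    unfolding meas
    by (intro measurable_compose[OF _ H(1)] borel_measurable_continuous_onI continuous_on_prefix_override)
  have weight_meas: "block_weight \<phi> N w \<in> borel_measurable \<nu>"
    unfolding meas by (intro borel_measurable_continuous_onI continuous_on_block_weight cont)
  have "\<bar>H (prefix_override N w v) * ?P v\<bar> \<le> B" for v
    by (rule abs_mult_le_of_abs_le_1[OF H(2)]) (simp split: split_indicator)
  then have "integrable \<nu> (\<lambda>v. H (prefix_override N w v) * ?P v)"
    by (rule integrable_abs_bounded[OF borel_measurable_times[OF H_override P_meas]])
  from real_cond_exp_intg(2)[OF this measurable_compose[OF measurable_prefix_override H(1)] P_meas]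
  have "(\<integral>v. H (prefix_override N w v) * ?P v \<partial>\<nu>)
      = (\<integral>v. H (prefix_override N w v) * real_cond_exp \<nu> ?F ?P v \<partial>\<nu>)"
    by simp
  also have "\<dots> = (\<integral>v. H (prefix_override N w v) * block_weight \<phi> N w v \<partial>\<nu>)"
  proof (rule integral_cong_AE)
    show "AE v in \<nu>. H (prefix_override N w v) * real_cond_exp \<nu> ?F ?P v
        = H (prefix_override N w v) * block_weight \<phi> N w v"
      using half_line_gibbsD(3)[OF hg \<open>N \<ge> 1\<close>, of w] by eventually_elim simp
  qed (use H_override weight_meas in auto)
  finally show ?thesis
    by (simp add: mult.commute)
qed

lemma half_line_gibbs_integral:
  fixes \<nu> :: "(nat \<Rightarrow> 'e::{finite,discrete_topology}) measure"
  assumes hg: "half_line_gibbs \<phi> \<nu>" and cont: "continuous_on UNIV \<phi>" and N: "N \<ge> 1"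
    and H: "H \<in> borel_measurable borel" "\<And>v. \<bar>H v\<bar> \<le> B"
  shows "(\<integral>v. H v \<partial>\<nu>)
       = (\<integral>v. (\<Sum>w\<in>Pi\<^sub>E {..<N} (\<lambda>_. UNIV). H (prefix_override N w v) * block_weight \<phi> N w v) \<partial>\<nu>)"
proof -
  let ?W = "Pi\<^sub>E {..<N} (\<lambda>_. UNIV) :: (nat \<Rightarrow> 'e) set"
  interpret prob_space \<nu> using half_line_gibbsD(1)[OF hg] .
  have meas: "measurable \<nu> = measurable borel"
    by (intro ext measurable_cong_sets[OF half_line_gibbsD(2)[OF hg] refl])
  have H_override: "(\<lambda>v. H (prefix_override N w v)) \<in> borel_measurable \<nu>" for w
    unfolding meas
    by (intro measurable_compose[OF _ H(1)] borel_measurable_continuous_onI continuous_on_prefix_override)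
  have P_meas: "indicator {y. \<forall>k<N. y k = w k} \<in> borel_measurable \<nu>" for w :: "nat \<Rightarrow> 'e"
    unfolding meas using prefix_in_sets_borel by (rule borel_measurable_indicator)
  have weight_meas: "block_weight \<phi> N w \<in> borel_measurable \<nu>" for w
    unfolding meas by (intro borel_measurable_continuous_onI continuous_on_block_weight cont)
  have prefix_integrable:
    "integrable \<nu> (\<lambda>v. indicator {y. \<forall>k<N. y k = w k} v * H (prefix_override N w v))" for w
    by (rule integrable_abs_bounded[OF borel_measurable_times[OF P_meas H_override], where B = B])
       (simp add: abs_mult_le_of_abs_le_1[OF H(2)] mult.commute[of "indicator _ _"] split: split_indicator)
  have "(\<integral>v. H v \<partial>\<nu>)
      = (\<integral>v. (\<Sum>w\<in>?W. indicator {y. \<forall>k<N. y k = w k} v * H (prefix_override N w v)) \<partial>\<nu>)"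
    by (rule Bochner_Integration.integral_cong[OF refl sum_prefix_indicator])
  also have "\<dots> = (\<Sum>w\<in>?W. \<integral>v. indicator {y. \<forall>k<N. y k = w k} v * H (prefix_override N w v) \<partial>\<nu>)"
    by (intro Bochner_Integration.integral_sum prefix_integrable)
  also have "\<dots> = (\<Sum>w\<in>?W. \<integral>v. H (prefix_override N w v) * block_weight \<phi> N w v \<partial>\<nu>)"
    using half_line_gibbs_integral_prefix[OF hg cont N H] by simp
  also have "\<dots> = (\<integral>v. (\<Sum>w\<in>?W. H (prefix_override N w v) * block_weight \<phi> N w v) \<partial>\<nu>)"
  proof (rule Bochner_Integration.integral_sum[symmetric])
    fix w assume "w \<in> ?W"
    then have "\<bar>block_weight \<phi> N w v\<bar> \<le> 1" for v
      using block_weight_nonneg[of \<phi> N w v] block_weight_le_1[of w N \<phi> v] by simp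
    then show "integrable \<nu> (\<lambda>v. H (prefix_override N w v) * block_weight \<phi> N w v)"
      by (intro integrable_abs_bounded[OF borel_measurable_times[OF H_override weight_meas], where B = B]
          abs_mult_le_of_abs_le_1[OF H(2)])
  qed
  finally show ?thesis .
qed

lemma sum_block_weight_resample_site:
  fixes H :: "(nat \<Rightarrow> 'e::finite) \<Rightarrow> real"
  assumes H_inv: "\<And>v b. H (v(m := b)) = H v"
  defines "N \<equiv> m + 1"
  shows "(\<Sum>w\<in>Pi\<^sub>E {..<N} (\<lambda>_. UNIV).
            H (prefix_override N w v) * indicator {v. v m = a} (prefix_override N w v) * block_weight \<phi> N w v)
       = (\<Sum>w\<in>Pi\<^sub>E {..<N} (\<lambda>_. UNIV).
            H (prefix_override N w v) * half_site_ratio \<phi> m a (prefix_override N w v) * block_weight \<phi> N w v)"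
proof -
  let ?W = "Pi\<^sub>E {..<N} (\<lambda>_. UNIV) :: (nat \<Rightarrow> 'e) set"
  have "m < N" by (simp add: N_def)
  define E where "E w = exp (Sn \<phi> N (prefix_override N w v))" for w
  define c where "c w = H (prefix_override N w v)" for w
  have weight: "block_weight \<phi> N w v = E w / sum E ?W" for w
    unfolding block_weight_def E_def ..
  have indicator: "indicator {v. v m = a} (prefix_override N w v) = (if w m = a then 1 else 0)" for w
    using \<open>m < N\<close> by (simp add: prefix_override_def)
  have ratio: "half_site_ratio \<phi> m a (prefix_override N w v) = E (w(m := a)) / (\<Sum>b\<in>UNIV. E (w(m := b)))" for w
    unfolding E_def half_site_ratio_def N_def[symmetric] prefix_override_fun_upd[OF \<open>m < N\<close>, symmetric] ..
  have "(\<Sum>w\<in>?W. c w * (if w m = a then 1 else 0) * E w)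
      = (\<Sum>w\<in>?W. c w * (E (w(m := a)) / (\<Sum>b\<in>UNIV. E (w(m := b)))) * E w)"
  proof (rule sum_resample_site)
    show "c (w(m := b)) = c w" for w b
      unfolding c_def prefix_override_fun_upd[OF \<open>m < N\<close>] H_inv ..
  qed (use \<open>m < N\<close> in \<open>auto simp: E_def finite_PiE PiE_iff extensional_def\<close>)
  moreover have "(\<Sum>w\<in>?W. H (prefix_override N w v) * indicator {v. v m = a} (prefix_override N w v)
        * block_weight \<phi> N w v) = (\<Sum>w\<in>?W. c w * (if w m = a then 1 else 0) * E w) / sum E ?W"
    unfolding indicator weight c_def[symmetric] sum_divide_distrib by (simp add: mult.assoc)
  moreover have "(\<Sum>w\<in>?W. H (prefix_override N w v) * half_site_ratio \<phi> m a (prefix_override N w v)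
        * block_weight \<phi> N w v)
      = (\<Sum>w\<in>?W. c w * (E (w(m := a)) / (\<Sum>b\<in>UNIV. E (w(m := b)))) * E w) / sum E ?W"
    unfolding ratio weight c_def[symmetric] sum_divide_distrib by (rule sum.cong[OF refl]) simp
  ultimately show ?thesis
    by (simp only:)
qed

lemma half_line_gibbs_single_site:
  fixes \<nu> :: "(nat \<Rightarrow> 'e::{finite,discrete_topology}) measure"
  assumes hg: "half_line_gibbs \<phi> \<nu>" and cont: "continuous_on UNIV \<phi>"
    and H: "H \<in> borel_measurable borel" "\<And>v. \<bar>H v\<bar> \<le> B"
    and H_inv: "\<And>v b. H (v(m := b)) = H v"
  shows "(\<integral>v. H v * indicator {v. v m = a} v \<partial>\<nu>) = (\<integral>v. H v * half_site_ratio \<phi> m a v \<partial>\<nu>)"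
proof -
  have N: "m + 1 \<ge> 1" by simp
  have meas1: "(\<lambda>v. H v * indicator {v. v m = a} v) \<in> borel_measurable borel"
    by (intro borel_measurable_times H(1) borel_measurable_indicator coord_in_sets_borel)
  have bound1: "\<bar>H v * indicator {v. v m = a} v\<bar> \<le> B" for v
    by (rule abs_mult_le_of_abs_le_1[OF H(2)]) (simp split: split_indicator)
  have meas2: "(\<lambda>v. H v * half_site_ratio \<phi> m a v) \<in> borel_measurable borel"
    by (intro borel_measurable_times H(1) borel_measurable_continuous_onI continuous_on_half_site_ratio cont)
  have bound2: "\<bar>H v * half_site_ratio \<phi> m a v\<bar> \<le> B" for v
    by (rule abs_mult_le_of_abs_le_1[OF H(2) abs_half_site_ratio_le_1])
  show ?thesis
    by (simp only: half_line_gibbs_integral[OF hg cont N meas1 bound1]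
        half_line_gibbs_integral[OF hg cont N meas2 bound2] sum_block_weight_resample_site[OF H_inv])
qed

section \<open>The shifted measures \<open>\<mu>\<^sub>n\<close>\<close>

lemma prob_space_rho: "prob_space (rho :: (nat \<Rightarrow> 'e::{finite,discrete_topology}) measure)"
  unfolding rho_def by (intro prob_space_PiM prob_space_measure_pmf)

lemma space_rho [simp]: "space (rho :: (nat \<Rightarrow> 'e::{finite,discrete_topology}) measure) = UNIV"
  unfolding rho_def by (simp add: space_PiM)

lemma coord_in_sets_rho: "{u. u k = b} \<in> sets (rho :: (nat \<Rightarrow> 'e::{finite,discrete_topology}) measure)"
proof -
  have "(\<lambda>u. u k) \<in> measurable (rho :: (nat \<Rightarrow> 'e) measure) (measure_pmf (pmf_of_set UNIV))"
    unfolding rho_def by (rule measurable_component_singleton) simp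
  from measurable_sets[OF this, of "{b}"] show ?thesis
    by (simp add: vimage_def)
qed

lemma measurable_glue:
  assumes "sets \<nu> = sets (borel :: (nat \<Rightarrow> 'e::{finite,discrete_topology}) measure)"
  shows "glue \<in> measurable (rho \<Otimes>\<^sub>M \<nu>) (borel :: (int \<Rightarrow> 'e) measure)"
proof (rule measurable_to_borel_coordinatewiseI)
  fix j :: int and b :: 'e
  have space: "space (rho \<Otimes>\<^sub>M \<nu>) = UNIV"
    using sets_eq_imp_space_eq[OF assms] by (simp add: space_pair_measure)
  show "{p \<in> space (rho \<Otimes>\<^sub>M \<nu>). glue p j = b} \<in> sets (rho \<Otimes>\<^sub>M \<nu>)"
  proof (cases "j < 0")
    case True
    then have "{p \<in> space (rho \<Otimes>\<^sub>M \<nu>). glue p j = b} = {u. u (nat (- j - 1)) = b} \<times> space \<nu>"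
      using space by (auto simp: glue_def space_pair_measure)
    then show ?thesis
      by (simp add: pair_measureI coord_in_sets_rho)
  next
    case False
    then have "{p \<in> space (rho \<Otimes>\<^sub>M \<nu>). glue p j = b} = space rho \<times> {v. v (nat j) = b}"
      using space by (auto simp: glue_def space_pair_measure)
    moreover have "{v. v (nat j) = b} \<in> sets \<nu>"
      using coord_in_sets_borel assms by simp
    ultimately show ?thesis
      by (simp only:) (intro pair_measureI sets.top)
  qed
qed

lemma sets_mun [simp]: "sets (mun \<nu> n) = sets borel"
  by (simp add: mun_def)

lemma integral_mun:
  fixes \<nu> :: "(nat \<Rightarrow> 'e::{finite,discrete_topology}) measure" and f :: "(int \<Rightarrow> 'e) \<Rightarrow> real"
  assumes "sets \<nu> = sets borel" "f \<in> borel_measurable borel"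
  shows "(\<integral>x. f x \<partial>mun \<nu> n) = (\<integral>p. f (\<lambda>j. glue p (j + int n)) \<partial>(rho \<Otimes>\<^sub>M \<nu>))"
proof -
  have shift: "(\<lambda>x j. x (j + int n)) \<in> measurable (mu0 \<nu>) (borel :: (int \<Rightarrow> 'e) measure)"
    using measurable_shift by (simp add: mu0_def)
  have "(\<integral>x. f x \<partial>mun \<nu> n) = (\<integral>x. f (\<lambda>j. x (j + int n)) \<partial>mu0 \<nu>)"
    unfolding mun_def by (rule integral_distr[OF shift assms(2)])
  also have "\<dots> = (\<integral>p. f (\<lambda>j. glue p (j + int n)) \<partial>(rho \<Otimes>\<^sub>M \<nu>))"
    unfolding mu0_def
    by (intro integral_distr measurable_glue assms measurable_compose[OF measurable_shift])
  finally show ?thesis .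
qed

lemma prob_space_mun:
  fixes \<nu> :: "(nat \<Rightarrow> 'e::{finite,discrete_topology}) measure"
  assumes "prob_space \<nu>" "sets \<nu> = sets borel"
  shows "prob_space (mun \<nu> n)"
proof -
  interpret pair_prob_space rho \<nu>
    by (simp add: pair_prob_space_def pair_sigma_finite_def prob_space_imp_sigma_finite prob_space_rho assms(1))
  have "prob_space (mu0 \<nu>)"
    unfolding mu0_def by (rule prob_space_distr[OF measurable_glue[OF assms(2)]])
  then show ?thesis
    unfolding mun_def
    by (rule prob_space.prob_space_distr) (simp add: mu0_def measurable_shift)
qed

lemma pair_half_line_gibbs_single_site:
  fixes \<nu> :: "(nat \<Rightarrow> 'e::{finite,discrete_topology}) measure" and G :: "(nat \<Rightarrow> 'e) \<times> (nat \<Rightarrow> 'e) \<Rightarrow> real"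
  assumes hg: "half_line_gibbs \<phi> \<nu>" and cont: "continuous_on UNIV \<phi>"
    and G: "G \<in> borel_measurable (rho \<Otimes>\<^sub>M \<nu>)" "\<And>p. \<bar>G p\<bar> \<le> B"
    and G_inv: "\<And>u v b. G (u, v(m := b)) = G (u, v)"
  shows "(\<integral>p. G p * indicator {v. v m = a} (snd p) \<partial>(rho \<Otimes>\<^sub>M \<nu>))
       = (\<integral>p. G p * half_site_ratio \<phi> m a (snd p) \<partial>(rho \<Otimes>\<^sub>M \<nu>))"
proof -
  have sets_eq: "sets \<nu> = sets borel" using half_line_gibbsD(2)[OF hg] .
  interpret pair_prob_space rho \<nu>
    by (simp add: pair_prob_space_def pair_sigma_finite_def prob_space_imp_sigma_finite
        prob_space_rho half_line_gibbsD(1)[OF hg])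
  have G_section_meas: "(\<lambda>v. G (u, v)) \<in> borel_measurable borel" for u
    using measurable_compose[OF measurable_Pair1' G(1), of u]
    by (simp add: measurable_cong_sets[OF sets_eq refl])
  have ratio_meas: "half_site_ratio \<phi> m a \<in> borel_measurable \<nu>"
    unfolding measurable_cong_sets[OF sets_eq refl]
    by (intro borel_measurable_continuous_onI continuous_on_half_site_ratio cont)
  have indicator_meas: "indicator {v. v m = a} \<in> borel_measurable \<nu>"
    using coord_in_sets_borel unfolding measurable_cong_sets[OF sets_eq refl]
    by (rule borel_measurable_indicator)
  have integrable: "integrable (rho \<Otimes>\<^sub>M \<nu>) (\<lambda>p. G p * g (snd p))"
    if "g \<in> borel_measurable \<nu>" "\<And>v. \<bar>g v\<bar> \<le> 1" for g
    using that by (intro P.integrable_abs_bounded[where B = B] borel_measurable_times G(1)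
        measurable_snd'' abs_mult_le_of_abs_le_1[OF G(2)]) auto
  have "(\<integral>p. G p * indicator {v. v m = a} (snd p) \<partial>(rho \<Otimes>\<^sub>M \<nu>))
      = (\<integral>u. \<integral>v. G (u, v) * indicator {v. v m = a} v \<partial>\<nu> \<partial>rho)"
    using integral_fst'[OF integrable[OF indicator_meas]] by (simp split: split_indicator)
  also have "\<dots> = (\<integral>u. \<integral>v. G (u, v) * half_site_ratio \<phi> m a v \<partial>\<nu> \<partial>rho)"
    using half_line_gibbs_single_site[OF hg cont G_section_meas G(2)] G_inv by simp
  also have "\<dots> = (\<integral>p. G p * half_site_ratio \<phi> m a (snd p) \<partial>(rho \<Otimes>\<^sub>M \<nu>))"
    using integral_fst'[OF integrable[OF ratio_meas abs_half_site_ratio_le_1]] by simp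
  finally show ?thesis .
qed

lemma glue_shift_fun_upd:
  assumes "int m = int n + i"
  shows "(\<lambda>j. glue (u, v(m := b)) (j + int n)) = (\<lambda>j. glue (u, v) (j + int n))(i := b)"
    and "splice (\<lambda>j. glue (u, v) (j + i + int n)) 0 b m = v(m := b)"
  using assms by (auto simp: glue_def splice_def fun_eq_iff)

lemma mun_single_site:
  fixes \<nu> :: "(nat \<Rightarrow> 'e::{finite,discrete_topology}) measure"
  assumes hg: "half_line_gibbs \<phi> \<nu>" and cont: "continuous_on UNIV \<phi>"
    and F: "F \<in> borel_measurable borel" "\<And>x. \<bar>F x\<bar> \<le> B"
    and F_inv: "\<And>x b. F (x(i := b)) = F x"
    and "0 \<le> int n + i"
  shows "(\<integral>x. F x * indicator {x. x i = a} x \<partial>mun \<nu> n)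
       = (\<integral>x. F x * site_ratio \<phi> (nat (int n + i)) a (\<lambda>j. x (j + i)) \<partial>mun \<nu> n)"
proof -
  define m where "m = nat (int n + i)"
  have m: "int m = int n + i"
    using \<open>0 \<le> int n + i\<close> by (simp add: m_def)
  define Y :: "(nat \<Rightarrow> 'e) \<times> (nat \<Rightarrow> 'e) \<Rightarrow> int \<Rightarrow> 'e"
    where "Y p = (\<lambda>j. glue p (j + int n))" for p
  have sets_eq: "sets \<nu> = sets borel" using half_line_gibbsD(2)[OF hg] .
  have F_Y_meas: "(\<lambda>p. F (Y p)) \<in> borel_measurable (rho \<Otimes>\<^sub>M \<nu>)"
    unfolding Y_def by (intro measurable_compose[OF measurable_glue[OF sets_eq] measurable_shift]
        measurable_compose[OF _ F(1)])
  have Y_i: "Y p i = snd p m" for p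
    using \<open>0 \<le> int n + i\<close> by (simp add: Y_def glue_def m_def add.commute split_beta)
  have F_Y_inv: "F (Y (u, v(m := b))) = F (Y (u, v))" for u v b
    unfolding Y_def glue_shift_fun_upd(1)[OF m] F_inv ..
  have Y_ratio: "site_ratio \<phi> m a (\<lambda>j. Y p (j + i)) = half_site_ratio \<phi> m a (snd p)" for p
    using glue_shift_fun_upd(2)[OF m, of "fst p" "snd p"]
    by (simp add: site_ratio_def half_site_ratio_def Y_def add.assoc[symmetric])
  have "(\<integral>x. F x * indicator {x. x i = a} x \<partial>mun \<nu> n)
      = (\<integral>p. F (Y p) * indicator {x. x i = a} (Y p) \<partial>(rho \<Otimes>\<^sub>M \<nu>))"
    unfolding Y_def
    by (intro integral_mun[OF sets_eq] borel_measurable_times F(1) borel_measurable_indicator coord_in_sets_borel)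
  also have "\<dots> = (\<integral>p. F (Y p) * indicator {v. v m = a} (snd p) \<partial>(rho \<Otimes>\<^sub>M \<nu>))"
    by (simp add: indicator_def Y_i)
  also have "\<dots> = (\<integral>p. F (Y p) * half_site_ratio \<phi> m a (snd p) \<partial>(rho \<Otimes>\<^sub>M \<nu>))"
    by (rule pair_half_line_gibbs_single_site[OF hg cont F_Y_meas F(2) F_Y_inv])
  also have "\<dots> = (\<integral>p. F (Y p) * site_ratio \<phi> m a (\<lambda>j. Y p (j + i)) \<partial>(rho \<Otimes>\<^sub>M \<nu>))"
    by (simp add: Y_ratio)
  also have "\<dots> = (\<integral>x. F x * site_ratio \<phi> m a (\<lambda>j. x (j + i)) \<partial>mun \<nu> n)"
    unfolding Y_def
    by (intro integral_mun[OF sets_eq, symmetric] borel_measurable_times F(1) borel_measurable_continuous_onI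
        continuous_on_compose2[OF continuous_on_site_ratio[OF cont] continuous_on_shift]) auto
  finally show ?thesis
    unfolding m_def .
qed

section \<open>The weak-* limit\<close>

lemma weak_star_conv_integral_eqI:
  fixes M :: "nat \<Rightarrow> (int \<Rightarrow> 'e::{finite,discrete_topology}) measure"
    and f g :: "(int \<Rightarrow> 'e) \<Rightarrow> real" and h :: "nat \<Rightarrow> (int \<Rightarrow> 'e) \<Rightarrow> real"
  assumes conv: "weak_star_conv M \<mu>" and M: "\<And>k. prob_space (M k)" "\<And>k. sets (M k) = sets borel"
    and f: "continuous_on UNIV f" and g: "continuous_on UNIV g"
    and h: "\<And>k. h k \<in> borel_measurable borel" "\<And>k x. \<bar>h k x\<bar> \<le> B"
    and lim: "uniform_limit UNIV h g sequentially"
    and eq: "\<forall>\<^sub>F k in sequentially. (\<integral>x. f x \<partial>M k) = (\<integral>x. h k x \<partial>M k)"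
  shows "(\<integral>x. f x \<partial>\<mu>) = (\<integral>x. g x \<partial>\<mu>)"
proof -
  have g_bound: "\<bar>g x\<bar> \<le> B" for x
    by (rule LIMSEQ_le_const2[OF tendsto_rabs[OF tendsto_uniform_limitI[OF lim UNIV_I]]])
       (use h(2) in auto)
  have "(\<lambda>k. (\<integral>x. h k x \<partial>M k) - (\<integral>x. g x \<partial>M k)) \<longlonglongrightarrow> 0"
    unfolding tendsto_iff
  proof (intro allI impI)
    fix e :: real assume "e > 0"
    then have "\<forall>\<^sub>F k in sequentially. \<forall>x\<in>UNIV. dist (h k x) (g x) < e / 2"
      using uniform_limitD[OF lim, of "e / 2"] \<open>e > 0\<close> by simp
    then have "\<forall>\<^sub>F k in sequentially. \<forall>x. \<bar>h k x - g x\<bar> \<le> e / 2"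
      by eventually_elim (simp add: dist_real_def less_imp_le)
    then show "\<forall>\<^sub>F k in sequentially. dist ((\<integral>x. h k x \<partial>M k) - (\<integral>x. g x \<partial>M k)) 0 < e"
    proof eventually_elim
      case (elim k)
      interpret prob_space "M k" by (rule M(1))
      have meas: "measurable (M k) = measurable borel"
        by (intro ext measurable_cong_sets[OF M(2) refl])
      have "integrable (M k) (h k)" "integrable (M k) g"
        using h g_bound by (auto intro!: integrable_abs_bounded borel_measurable_continuous_onI g simp: meas)
      have "\<bar>(\<integral>x. h k x \<partial>M k) - (\<integral>x. g x \<partial>M k)\<bar> \<le> e / 2"
        using elim by (intro abs_integral_diff_le[OF \<open>integrable (M k) (h k)\<close> \<open>integrable (M k) g\<close>]) simp
      then show ?case
        using \<open>e > 0\<close> by simp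
    qed
  qed
  then have "(\<lambda>k. (\<integral>x. f x \<partial>M k) - (\<integral>x. g x \<partial>M k)) \<longlonglongrightarrow> 0"
    by (rule Lim_transform_eventually) (use eq in eventually_elim, simp)
  moreover have "(\<lambda>k. (\<integral>x. f x \<partial>M k) - (\<integral>x. g x \<partial>M k)) \<longlonglongrightarrow> (\<integral>x. f x \<partial>\<mu>) - (\<integral>x. g x \<partial>\<mu>)"
    using conv f g unfolding weak_star_conv_def by (intro tendsto_diff) auto
  ultimately show ?thesis
    using LIMSEQ_unique by fastforce
qed

lemma uniform_limit_indicator_site_ratio:
  assumes "extensible \<phi>" and n: "filterlim n sequentially sequentially"
  shows "uniform_limit UNIV (\<lambda>k x. indicator A x * site_ratio \<phi> (n k) a (\<lambda>j. x (j + i)))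
           (\<lambda>x. indicator A x * site_kernel \<phi> a (\<lambda>j. x (j + i))) sequentially"
  unfolding uniform_limit_iff
proof (intro allI impI)
  fix e :: real assume "e > 0"
  with eventually_compose_filterlim[OF uniform_limitD[OF uniform_limit_site_ratio[OF assms(1)]] n]
  have "\<forall>\<^sub>F k in sequentially. \<forall>y. dist (site_ratio \<phi> (n k) a y) (site_kernel \<phi> a y) < e"
    by simp
  then show "\<forall>\<^sub>F k in sequentially. \<forall>x\<in>UNIV. dist (indicator A x * site_ratio \<phi> (n k) a (\<lambda>j. x (j + i)))
      (indicator A x * site_kernel \<phi> a (\<lambda>j. x (j + i))) < e"
  proof eventually_elim
    case (elim k)
    then show ?case
      using \<open>e > 0\<close> by (simp add: dist_real_def split: split_indicator)
  qed
qed

lemma weak_limit_single_site: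
  fixes \<phi> :: "(nat \<Rightarrow> 'e::{finite,discrete_topology}) \<Rightarrow> real"
    and \<mu> :: "(int \<Rightarrow> 'e) measure" and S :: "(int \<times> 'e) set"
  assumes cont: "continuous_on UNIV \<phi>" and ext: "extensible \<phi>" and hg: "half_line_gibbs \<phi> \<nu>"
    and r: "strict_mono r" and conv: "weak_star_conv (\<lambda>k. mun \<nu> (r k)) \<mu>"
    and S: "finite S" "i \<notin> fst ` S"
  shows "(\<integral>x. indicator (cyl S) x * indicator {x. x i = a} x \<partial>\<mu>)
       = (\<integral>x. indicator (cyl S) x * site_kernel \<phi> a (\<lambda>j. x (j + i)) \<partial>\<mu>)"
proof -
  define n where "n k = nat (int (r k) + i)" for k
  have n: "filterlim n sequentially sequentially"
    unfolding n_def by (rule filterlim_compose[OF filterlim_nat_int_add filterlim_subseq[OF r]])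
  have continuous_shifted: "continuous_on UNIV (\<lambda>x. f (\<lambda>j. x (j + i)))" if "continuous_on UNIV f" for f
    by (rule continuous_on_compose2[OF that continuous_on_shift]) auto
  show ?thesis
  proof (rule weak_star_conv_integral_eqI[OF conv, where B = 1
        and h = "\<lambda>k x. indicator (cyl S) x * site_ratio \<phi> (n k) a (\<lambda>j. x (j + i))"])
    show "prob_space (mun \<nu> (r k))" "sets (mun \<nu> (r k)) = sets borel" for k
      using prob_space_mun half_line_gibbsD(1,2)[OF hg] by auto
    show "continuous_on UNIV (\<lambda>x. indicator (cyl S) x * indicator {x. x i = a} x :: real)"
      using S(1) by (intro continuous_on_mult continuous_on_indicator_cyl continuous_on_indicator_coord)
    show "continuous_on UNIV (\<lambda>x. indicator (cyl S) x * site_kernel \<phi> a (\<lambda>j. x (j + i)))"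
      using S(1) by (intro continuous_on_mult continuous_on_indicator_cyl continuous_shifted
          continuous_on_site_kernel cont ext)
    show "(\<lambda>x. indicator (cyl S) x * site_ratio \<phi> (n k) a (\<lambda>j. x (j + i))) \<in> borel_measurable borel" for k
      using S(1) by (intro borel_measurable_continuous_onI continuous_on_mult continuous_on_indicator_cyl
          continuous_shifted continuous_on_site_ratio cont)
    show "\<bar>indicator (cyl S) x * site_ratio \<phi> (n k) a (\<lambda>j. x (j + i))\<bar> \<le> 1" for k x
      by (simp add: abs_site_ratio_le_1 split: split_indicator)
    show "uniform_limit UNIV (\<lambda>k x. indicator (cyl S) x * site_ratio \<phi> (n k) a (\<lambda>j. x (j + i)))
        (\<lambda>x. indicator (cyl S) x * site_kernel \<phi> a (\<lambda>j. x (j + i))) sequentially"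
      by (rule uniform_limit_indicator_site_ratio[OF ext n])
    \<comment> \<open>site \<open>i\<close> lies in the \<open>\<nu>\<close>-half of the configurations of \<open>\<mu>\<^sub>r\<^sub>k\<close> only once \<open>r k \<ge> -i\<close>\<close>
    have "\<forall>\<^sub>F k in sequentially. nat (- i) \<le> r k"
      by (rule eventually_compose_filterlim[OF eventually_ge_at_top filterlim_subseq[OF r]])
    then have "\<forall>\<^sub>F k in sequentially. 0 \<le> int (r k) + i"
      by eventually_elim auto
    then show "\<forall>\<^sub>F k in sequentially. (\<integral>x. indicator (cyl S) x * indicator {x. x i = a} x \<partial>mun \<nu> (r k))
        = (\<integral>x. indicator (cyl S) x * site_ratio \<phi> (n k) a (\<lambda>j. x (j + i)) \<partial>mun \<nu> (r k))"
      unfolding n_def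
      by eventually_elim (intro mun_single_site[OF hg cont, where B = 1] borel_measurable_indicator
          cyl_in_sets_borel S(1), auto simp: cyl_fun_upd[OF S(2)] split: split_indicator)
  qed
qed

lemma real_cond_exp_single_site:
  fixes \<phi> :: "(nat \<Rightarrow> 'e::{finite,discrete_topology}) \<Rightarrow> real" and \<mu> :: "(int \<Rightarrow> 'e) measure"
  assumes cont: "continuous_on UNIV \<phi>" and ext: "extensible \<phi>" and hg: "half_line_gibbs \<phi> \<nu>"
    and r: "strict_mono r" and \<mu>: "prob_space \<mu>" "sets \<mu> = sets borel"
    and conv: "weak_star_conv (\<lambda>k. mun \<nu> (r k)) \<mu>"
  shows "AE x in \<mu>. real_cond_exp \<mu> (coord_algebra (- {i})) (indicator {y. y i = a}) x
           = site_kernel \<phi> a (\<lambda>j. x (j + i))"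
proof -
  interpret prob_space \<mu> by (rule \<mu>(1))
  have meas: "measurable \<mu> = measurable borel"
    by (intro HOL.ext measurable_cong_sets[OF \<mu>(2) refl])
  have kernel_meas: "(\<lambda>x. site_kernel \<phi> a (\<lambda>j. x (j + i))) \<in> borel_measurable borel"
    by (intro borel_measurable_continuous_onI continuous_on_compose2[OF continuous_on_site_kernel[OF cont ext]
        continuous_on_shift]) auto
  have "(\<lambda>j. (x(i := b)) (j + i)) = (\<lambda>j. x (j + i))(0 := b)" for x :: "int \<Rightarrow> 'e" and b
    by (auto simp: fun_eq_iff)
  then have kernel_inv: "site_kernel \<phi> a (\<lambda>j. (x(i := b)) (j + i)) = site_kernel \<phi> a (\<lambda>j. x (j + i))"
    for x :: "int \<Rightarrow> 'e" and b
    by (simp add: site_kernel_fun_upd_0)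
  show ?thesis
  proof (rule real_cond_exp_coord_algebra_eqI[OF finite_measure_axioms \<mu>(2)])
    show "integrable \<mu> (indicator {y. y i = a} :: _ \<Rightarrow> real)"
      by (intro integrable_abs_bounded[where B = 1] borel_measurable_indicator)
         (auto simp: \<mu>(2) coord_in_sets_borel split: split_indicator)
    show "integrable \<mu> (\<lambda>x. site_kernel \<phi> a (\<lambda>j. x (j + i)))"
      using kernel_meas abs_site_kernel_le_1
      by (intro integrable_abs_bounded[where B = 1]) (auto simp: meas)
    show "(\<lambda>x. site_kernel \<phi> a (\<lambda>j. x (j + i))) \<in> borel_measurable (coord_algebra (- {i}))"
      by (rule borel_measurable_coord_algebra_if_invariant[OF kernel_meas kernel_inv])
    show "(\<integral>x. indicator (cyl S) x * indicator {y. y i = a} x \<partial>\<mu>)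
        = (\<integral>x. indicator (cyl S) x * site_kernel \<phi> a (\<lambda>j. x (j + i)) \<partial>\<mu>)"
      if "finite S" "fst ` S \<subseteq> - {i}" for S
      using that by (intro weak_limit_single_site[OF cont ext hg r conv]) auto
  qed
qed

theorem theoremA:
  fixes \<phi> :: "(nat \<Rightarrow> 'e::{finite,discrete_topology}) \<Rightarrow> real"
    and \<nu> :: "(nat \<Rightarrow> 'e) measure" and \<mu> :: "(int \<Rightarrow> 'e) measure" and r :: "nat \<Rightarrow> nat"
  assumes "continuous_on UNIV \<phi>"
    and "extensible \<phi>"
    and "half_line_gibbs \<phi> \<nu>"
    and "strict_mono r"
    and "prob_space \<mu>" and "sets \<mu> = sets borel"
    and "weak_star_conv (\<lambda>k. mun \<nu> (r k)) \<mu>"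
  shows "(AE x in \<mu>.
           real_cond_exp \<mu> (coord_algebra (- {0})) (indicator {y. y 0 = x 0}) x = gamma \<phi> 0 (x 0) x
         \<and> (\<lambda>n. exp (Sn \<phi> (n + 1) (splice x 0 (x 0) n))
               / (\<Sum>b\<in>UNIV. exp (Sn \<phi> (n + 1) (splice x 0 b n)))) \<longlonglongrightarrow> gamma \<phi> 0 (x 0) x)
         \<and> whole_line_gibbs \<phi> \<mu>"
proof -
  have site: "AE x in \<mu>. real_cond_exp \<mu> (coord_algebra (- {i})) (indicator {y. y i = a}) x = gamma \<phi> i a x"
    for i a
    using real_cond_exp_single_site[OF assms] by (simp add: gamma_eq_site_kernel[OF assms(2)])
  then have "AE x in \<mu>. \<forall>a. real_cond_exp \<mu> (coord_algebra (- {0})) (indicator {y. y 0 = a}) x = gamma \<phi> 0 a x"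
    by (subst AE_all_countable) auto
  moreover have "(\<lambda>n. exp (Sn \<phi> (n + 1) (splice x 0 c n))
      / (\<Sum>b\<in>UNIV. exp (Sn \<phi> (n + 1) (splice x 0 b n)))) \<longlonglongrightarrow> gamma \<phi> 0 c x" for x c
    using site_ratio_tendsto[OF assms(2)] by (simp add: site_ratio_def gamma_eq_site_kernel[OF assms(2)])
  ultimately show ?thesis
    using site assms(5,6) unfolding whole_line_gibbs_def by (auto elim: AE_mp)
qed

end
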